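(* Let $G\subset\mathbb R^r$ be a lattice of rank $r$ acting on $C(\mathbb R^r)$ by $f^g(x)=f(x+g)$, and let $A$ be a $G$-invariant vector subspace of $C(\mathbb R^r)$. If $A^G=A\cap C^G$ is finite dimensional, then $P_n^G(A)=A\cap P_n^G$ is finite dimensional for every $n\in\mathbb Z_+$.
   Context: $C(\mathbb R^r)$ is the algebra of continuous (real or complex) functions on $\mathbb R^r$; $x_1,\dots,x_r$ are the standard coordinates. $C^G$ is the set of continuous $G$-periodic functions ($f(x+g)=f(x)$ for all $g\in G$). $P_n^G$ is the space of polynomials in $x_1,\dots,x_r$ of degree at most $n$ with coefficients in $C^G$. $A$ is $G$-invariant if $f\in A$ implies $f(\cdot+g)\in A$ for all $g\in G$. *)

theory Defs
  imports "HOL-Analysis.Analysis"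
begin

text \<open>Points of R^r are vectors of type real^'n with r = CARD('n).
  Scalars 'b are real or complex (class real_normed_field).\<close>

definition full_rank_lattice :: "(real^'n) set \<Rightarrow> bool" where
  "full_rank_lattice G \<longleftrightarrow>
     (\<exists>b :: 'n \<Rightarrow> real^'n. inj b \<and> independent (range b) \<and>
        G = {(\<Sum>i\<in>UNIV. of_int (k i) *\<^sub>R b i) | k :: 'n \<Rightarrow> int. True})"

definition periodic_cont :: "(real^'n) set \<Rightarrow> (real^'n \<Rightarrow> 'b::real_normed_field) set" where
  "periodic_cont G = {f. continuous_on UNIV f \<and> (\<forall>g\<in>G. \<forall>x. f (x + g) = f x)}"

definition poly_periodic :: "nat \<Rightarrow> (real^'n) set \<Rightarrow> (real^'n \<Rightarrow> 'b::real_normed_field) set" where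
  "poly_periodic n G = {f. \<exists>c :: ('n \<Rightarrow> nat) \<Rightarrow> real^'n \<Rightarrow> 'b.
      (\<forall>\<alpha>. c \<alpha> \<in> periodic_cont G) \<and>
      f = (\<lambda>x. \<Sum>\<alpha>\<in>{\<alpha>. sum \<alpha> UNIV \<le> n}. c \<alpha> x * (\<Prod>i\<in>UNIV. of_real (x $ i) ^ \<alpha> i))}"

definition cont_subspace :: "(real^'n \<Rightarrow> 'b::real_normed_field) set \<Rightarrow> bool" where
  "cont_subspace A \<longleftrightarrow> (\<forall>f\<in>A. continuous_on UNIV f) \<and> (\<lambda>x. 0) \<in> A \<and>
     (\<forall>f\<in>A. \<forall>h\<in>A. (\<lambda>x. f x + h x) \<in> A) \<and> (\<forall>c. \<forall>f\<in>A. (\<lambda>x. c * f x) \<in> A)"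

definition G_invariant :: "(real^'n) set \<Rightarrow> (real^'n \<Rightarrow> 'b) set \<Rightarrow> bool" where
  "G_invariant G A \<longleftrightarrow> (\<forall>f\<in>A. \<forall>g\<in>G. (\<lambda>x. f (x + g)) \<in> A)"

definition fun_span :: "('a \<Rightarrow> 'b::field) set \<Rightarrow> ('a \<Rightarrow> 'b) set" where
  "fun_span F = {f. \<exists>S a. finite S \<and> S \<subseteq> F \<and> f = (\<lambda>x. \<Sum>h\<in>S. a h * h x)}"

definition fin_dim :: "('a \<Rightarrow> 'b::field) set \<Rightarrow> bool" where
  "fin_dim S \<longleftrightarrow> (\<exists>F. finite F \<and> F \<subseteq> S \<and> S \<subseteq> fun_span F)"

end

theory Submission
  imports Defs "HOL-Library.Function_Algebras"
begin

text \<open>Let b_1, ..., b_r be a basis of G and \<Delta>_i f = f(\<cdot> + b_i) - f. These difference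
  operators are linear and, by G-invariance, preserve A. Since the coefficients are G-periodic
  and differencing a monomial lowers its degree, \<Delta>_i maps A \<inter> P_(n+1)^G into A \<inter> P_n^G,
  while the common kernel of the \<Delta>_i consists of G-periodic functions and so lies in A^G.
  A space on which finitely many linear maps have finite-dimensional images and a
  finite-dimensional common kernel is itself finite dimensional, so induction on n, starting
  from P_0^G \<subseteq> C^G, proves the theorem.\<close>

section \<open>Finite dimensionality in spaces of functions\<close>

definition fun_scale :: "'b::field \<Rightarrow> ('a \<Rightarrow> 'b) \<Rightarrow> ('a \<Rightarrow> 'b)" where
  "fun_scale c f = (\<lambda>x. c * f x)"

interpretation fun_vs: vector_space "fun_scale :: 'b::field \<Rightarrow> ('a \<Rightarrow> 'b) \<Rightarrow> ('a \<Rightarrow> 'b)"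
  by unfold_locales (auto simp: fun_scale_def fun_eq_iff algebra_simps)

lemma sum_fun_apply: "(sum f S) x = (\<Sum>a\<in>S. f a x)"
  by (induction S rule: infinite_finite_induct) auto

lemma fun_span_eq_span: "fun_span F = fun_vs.span F"
  unfolding fun_span_def fun_vs.span_explicit
  by (auto simp: fun_eq_iff sum_fun_apply fun_scale_def)

lemma fin_dim_iff_span: "fin_dim S \<longleftrightarrow> (\<exists>F. finite F \<and> F \<subseteq> S \<and> S \<subseteq> fun_vs.span F)"
  unfolding fin_dim_def fun_span_eq_span ..

lemma fin_dim_subset:
  assumes "fin_dim S" "U \<subseteq> S"
  shows "fin_dim (U :: ('a \<Rightarrow> 'b::field) set)"
proof -
  obtain F where F: "finite F" "S \<subseteq> fun_vs.span F"
    using assms(1) fin_dim_iff_span by blast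
  obtain B where B: "B \<subseteq> U" "fun_vs.independent B" "U \<subseteq> fun_vs.span B"
    using fun_vs.maximal_independent_subset by blast
  have "B \<subseteq> fun_vs.span F" using B(1) assms(2) F(2) by blast
  then have "finite B" using fun_vs.independent_span_bound[OF F(1) B(2)] by simp
  then show ?thesis using B fin_dim_iff_span by blast
qed

lemma fin_dim_kernel_image:
  fixes T :: "('a \<Rightarrow> 'b::field) \<Rightarrow> ('c \<Rightarrow> 'b)"
  assumes lin: "Vector_Spaces.linear fun_scale fun_scale T"
    and V: "fun_vs.subspace V"
    and image: "fin_dim (T ` V)"
    and kernel: "fin_dim {v\<in>V. T v = 0}"
  shows "fin_dim V"
proof -
  interpret T: Vector_Spaces.linear fun_scale fun_scale T by (fact lin)
  obtain B where B: "finite B" "B \<subseteq> T ` V" "T ` V \<subseteq> fun_vs.span B"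
    using image unfolding fin_dim_iff_span by blast
  obtain L where L: "L \<subseteq> V" "finite L" "B = T ` L"
    using finite_subset_image[OF B(1,2)] by blast
  obtain C where C: "finite C" "C \<subseteq> {v\<in>V. T v = 0}" "{v\<in>V. T v = 0} \<subseteq> fun_vs.span C"
    using kernel unfolding fin_dim_iff_span by blast
  have span_B: "fun_vs.span B = T ` fun_vs.span L"
    using L(3) T.span_image by simp
  have "v \<in> fun_vs.span (L \<union> C)" if v: "v \<in> V" for v
  proof -
    have "T v \<in> T ` fun_vs.span L"
      using v B(3) unfolding span_B[symmetric] by blast
    then obtain u where u: "u \<in> fun_vs.span L" "T u = T v"
      by (metis imageE)
    have "u \<in> V" using fun_vs.span_minimal[OF L(1) V] u(1) by blast
    then have "v - u \<in> V" by (rule fun_vs.subspace_diff[OF V v])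
    moreover have "T (v - u) = 0" using u(2) T.diff by simp
    ultimately have "v - u \<in> fun_vs.span C" using C(3) by blast
    then have "v - u \<in> fun_vs.span (L \<union> C)" using fun_vs.span_mono[of C "L \<union> C"] by blast
    moreover have "u \<in> fun_vs.span (L \<union> C)" using u(1) fun_vs.span_mono[of L "L \<union> C"] by blast
    ultimately have "(v - u) + u \<in> fun_vs.span (L \<union> C)" by (rule fun_vs.span_add)
    then show ?thesis by simp
  qed
  moreover have "finite (L \<union> C)" "L \<union> C \<subseteq> V" using L C by auto
  ultimately show ?thesis unfolding fin_dim_iff_span by blast
qed

lemma fin_dim_common_kernel:
  fixes T :: "'i \<Rightarrow> ('a \<Rightarrow> 'b::field) \<Rightarrow> ('c \<Rightarrow> 'b)"
  assumes "finite I"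
    and "\<And>i. i \<in> I \<Longrightarrow> Vector_Spaces.linear fun_scale fun_scale (T i)"
    and "fun_vs.subspace V"
    and "\<And>i. i \<in> I \<Longrightarrow> fin_dim (T i ` V)"
    and "fin_dim {v\<in>V. \<forall>i\<in>I. T i v = 0}"
  shows "fin_dim V"
  using assms
proof (induction I arbitrary: V rule: finite_induct)
  case empty
  then show ?case by simp
next
  case (insert i I)
  let ?V' = "{v\<in>V. T i v = 0}"
  interpret T: Vector_Spaces.linear fun_scale fun_scale "T i"
    using insert.prems(1) by simp
  have "?V' = V \<inter> {v. T i v = 0}" by blast
  then have subspace: "fun_vs.subspace ?V'"
    using fun_vs.subspace_inter[OF insert.prems(2) T.subspace_kernel] by simp
  have "fin_dim ?V'"
  proof (rule insert.IH)
    show "fin_dim (T j ` ?V')" if "j \<in> I" for j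
      by (rule fin_dim_subset[OF insert.prems(3)[of j]]) (use that in auto)
    have kernel_eq: "{v\<in>?V'. \<forall>j\<in>I. T j v = 0} = {v\<in>V. \<forall>j\<in>insert i I. T j v = 0}" by auto
    show "fin_dim {v\<in>?V'. \<forall>j\<in>I. T j v = 0}" unfolding kernel_eq by (rule insert.prems(4))
    show "Vector_Spaces.linear fun_scale fun_scale (T j)" if "j \<in> I" for j
      using insert.prems(1) that by simp
  qed (fact subspace)
  then show ?case
    using fin_dim_kernel_image[OF insert.prems(1)[of i] insert.prems(2) insert.prems(3)[of i]]
    by simp
qed

lemma linear_difference: "Vector_Spaces.linear fun_scale fun_scale (\<lambda>f x. f (x + a) - f x)"
  by unfold_locales (auto simp: fun_scale_def fun_eq_iff algebra_simps)

section \<open>Polynomials with constant coefficients\<close>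

definition monomial :: "('n \<Rightarrow> nat) \<Rightarrow> real^'n \<Rightarrow> 'b::real_normed_field" where
  "monomial \<alpha> x = (\<Prod>i\<in>UNIV. of_real (x $ i) ^ \<alpha> i)"

text \<open>The degree bound is strict, so that \<open>polyfun_lt 0\<close> is the zero space and differencing
  maps \<open>polyfun_lt (Suc n)\<close> into \<open>polyfun_lt n\<close> without an exceptional case.\<close>
inductive polyfun_lt :: "nat \<Rightarrow> (real^'n \<Rightarrow> 'b::real_normed_field) \<Rightarrow> bool" for n where
  zero: "polyfun_lt n (\<lambda>x. 0)"
| monomial: "sum \<alpha> UNIV < n \<Longrightarrow> polyfun_lt n (\<lambda>x. c * monomial \<alpha> x)"
| add: "polyfun_lt n p \<Longrightarrow> polyfun_lt n q \<Longrightarrow> polyfun_lt n (\<lambda>x. p x + q x)"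

lemma polyfun_lt_scale: "polyfun_lt n p \<Longrightarrow> polyfun_lt n (\<lambda>x. c * p x)"
proof (induction rule: polyfun_lt.induct)
  case zero
  then show ?case using polyfun_lt.zero by simp
next
  case (monomial \<alpha> d)
  then show ?case using polyfun_lt.monomial[of \<alpha> n "c * d"] by (simp add: mult.assoc)
next
  case (add p q)
  then show ?case using polyfun_lt.add[OF add.IH] by (simp add: distrib_left)
qed

lemma polyfun_lt_mono: "polyfun_lt m p \<Longrightarrow> m \<le> n \<Longrightarrow> polyfun_lt n p"
  by (induction rule: polyfun_lt.induct) (auto intro: polyfun_lt.intros)

lemma monomial_eq_1: "sum \<alpha> (UNIV :: 'n::finite set) = 0 \<Longrightarrow> monomial \<alpha> x = 1"
  unfolding monomial_def by simp

lemma monomial_upd_Suc: "monomial (\<alpha>(i := Suc (\<alpha> i))) x = of_real (x $ i) * monomial \<alpha> x"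
proof -
  have "monomial (\<alpha>(i := Suc (\<alpha> i))) x =
      of_real (x $ i) ^ Suc (\<alpha> i) * (\<Prod>j\<in>UNIV - {i}. of_real (x $ j) ^ \<alpha> j)"
    unfolding monomial_def by (subst prod.remove[of _ i]) (auto intro!: prod.cong)
  also have "\<dots> = of_real (x $ i) * monomial \<alpha> x"
    unfolding monomial_def by (subst prod.remove[of _ i]) auto
  finally show ?thesis .
qed

lemma sum_upd_Suc: "sum (\<alpha>(i := Suc (\<alpha> i))) (UNIV :: 'n::finite set) = Suc (sum \<alpha> UNIV)"
proof -
  have "sum (\<alpha>(i := Suc (\<alpha> i))) (UNIV :: 'n set) = Suc (\<alpha> i) + sum \<alpha> (UNIV - {i})"
    by (subst sum.remove[of _ i]) (auto intro!: sum.cong)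
  also have "\<dots> = Suc (sum \<alpha> UNIV)"
    by (subst (2) sum.remove[of _ i]) auto
  finally show ?thesis .
qed

lemma sum_eq_SucE:
  fixes \<alpha> :: "'n::finite \<Rightarrow> nat"
  assumes "sum \<alpha> UNIV = Suc d"
  obtains \<beta> i where "\<alpha> = \<beta>(i := Suc (\<beta> i))" "sum \<beta> UNIV = d"
proof -
  obtain i where "\<alpha> i > 0"
    using assms by (metis Zero_not_Suc gr0I sum.neutral)
  then have "\<alpha> = (\<alpha>(i := \<alpha> i - 1))(i := Suc ((\<alpha>(i := \<alpha> i - 1)) i))" by auto
  moreover from this have "sum (\<alpha>(i := \<alpha> i - 1)) UNIV = d"
    using assms sum_upd_Suc[of "\<alpha>(i := \<alpha> i - 1)" i] by simp
  ultimately show ?thesis by (rule that)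
qed

lemma polyfun_lt_mult_coord:
  "polyfun_lt n p \<Longrightarrow> polyfun_lt (Suc n) (\<lambda>x. of_real (x $ i) * p x)"
proof (induction rule: polyfun_lt.induct)
  case zero
  then show ?case using polyfun_lt.zero by simp
next
  case (monomial \<alpha> c)
  then have "sum (\<alpha>(i := Suc (\<alpha> i))) UNIV < Suc n"
    unfolding sum_upd_Suc by simp
  then have "polyfun_lt (Suc n) (\<lambda>x. c * monomial (\<alpha>(i := Suc (\<alpha> i))) x)"
    by (rule polyfun_lt.monomial)
  then show ?case by (simp add: monomial_upd_Suc mult.left_commute)
next
  case (add p q)
  then show ?case using polyfun_lt.add[OF add.IH] by (simp add: distrib_left)
qed

text \<open>If the monomial is x_i m(x), its difference is
  x_i (m(x + g) - m(x)) + g_i m(x + g), and m(x + g) = m(x) + (m(x + g) - m(x)).\<close>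
lemma polyfun_lt_diff_monomial:
  fixes g :: "real^'n"
  assumes "sum \<alpha> UNIV < Suc n"
  shows "polyfun_lt n (\<lambda>x. monomial \<alpha> (x + g) - (monomial \<alpha> x :: 'b::real_normed_field))"
  using assms
proof (induction "sum \<alpha> UNIV" arbitrary: \<alpha> n)
  case 0
  then show ?case using polyfun_lt.zero by (simp add: monomial_eq_1)
next
  case (Suc d)
  obtain \<beta> i where \<alpha>: "\<alpha> = \<beta>(i := Suc (\<beta> i))" and d: "sum \<beta> UNIV = d"
    using sum_eq_SucE[OF Suc.hyps(2)[symmetric]] by blast
  obtain m where n: "n = Suc m" using Suc.hyps(2) Suc.prems by (cases n) auto
  let ?diff = "\<lambda>x. monomial \<beta> (x + g) - (monomial \<beta> x :: 'b)"
  have diff: "polyfun_lt m ?diff"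
    using Suc.hyps(1)[OF d[symmetric]] d Suc.hyps(2) Suc.prems n by simp
  have x_term: "polyfun_lt n (\<lambda>x. of_real (x $ i) * ?diff x)"
    using polyfun_lt_mult_coord[OF diff] n by simp
  have "polyfun_lt n (\<lambda>x. ?diff x + 1 * monomial \<beta> x)"
    using polyfun_lt_mono[OF diff] polyfun_lt.monomial[of \<beta> n 1] d Suc.hyps(2) Suc.prems n
    by (intro polyfun_lt.add) auto
  then have g_term: "polyfun_lt n (\<lambda>x. of_real (g $ i) * (monomial \<beta> (x + g) :: 'b))"
    by (intro polyfun_lt_scale) simp
  have "polyfun_lt n (\<lambda>x. of_real (x $ i) * ?diff x + of_real (g $ i) * monomial \<beta> (x + g))"
    using polyfun_lt.add[OF x_term g_term] .
  then show ?case unfolding \<alpha> monomial_upd_Suc by (simp add: algebra_simps)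
qed

lemma finite_degree_le: "finite {\<alpha> :: 'n::finite \<Rightarrow> nat. sum \<alpha> UNIV \<le> n}"
proof (rule finite_subset)
  show "{\<alpha> :: 'n \<Rightarrow> nat. sum \<alpha> UNIV \<le> n} \<subseteq> PiE UNIV (\<lambda>_. {..n})"
  proof
    fix \<alpha> :: "'n \<Rightarrow> nat" assume "\<alpha> \<in> {\<alpha>. sum \<alpha> UNIV \<le> n}"
    then have "\<alpha> i \<le> n" for i using member_le_sum[of i UNIV \<alpha>] by auto
    then show "\<alpha> \<in> PiE UNIV (\<lambda>_. {..n})" by auto
  qed
qed (intro finite_PiE; simp)

section \<open>Polynomials with periodic coefficients\<close>

lemma periodic_cont_zero: "(\<lambda>x. 0) \<in> periodic_cont G"
  unfolding periodic_cont_def by auto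

lemma periodic_cont_scale: "c \<in> periodic_cont G \<Longrightarrow> (\<lambda>x. d * c x) \<in> periodic_cont G"
  unfolding periodic_cont_def by (simp add: continuous_on_mult_left)

lemma periodic_cont_add:
  "c \<in> periodic_cont G \<Longrightarrow> e \<in> periodic_cont G \<Longrightarrow> (\<lambda>x. c x + e x) \<in> periodic_cont G"
  unfolding periodic_cont_def by (simp add: continuous_on_add)

lemma poly_periodic_eq:
  "poly_periodic n G = {f. \<exists>c. (\<forall>\<alpha>. c \<alpha> \<in> periodic_cont G) \<and>
      f = (\<lambda>x. \<Sum>\<alpha>\<in>{\<alpha>. sum \<alpha> UNIV \<le> n}. c \<alpha> x * monomial \<alpha> x)}"
  unfolding poly_periodic_def monomial_def ..

lemma poly_periodic_zero: "(\<lambda>x. 0) \<in> poly_periodic n G"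
  unfolding poly_periodic_eq using periodic_cont_zero by (intro CollectI exI[of _ "\<lambda>_ _. 0"]) auto

lemma poly_periodic_add:
  assumes "f \<in> poly_periodic n G" "h \<in> poly_periodic n G"
  shows "(\<lambda>x. f x + h x) \<in> poly_periodic n G"
proof -
  obtain c where c: "\<forall>\<alpha>. c \<alpha> \<in> periodic_cont G"
    "f = (\<lambda>x. \<Sum>\<alpha>\<in>{\<alpha>. sum \<alpha> UNIV \<le> n}. c \<alpha> x * monomial \<alpha> x)"
    using assms(1) unfolding poly_periodic_eq by blast
  obtain e where e: "\<forall>\<alpha>. e \<alpha> \<in> periodic_cont G"
    "h = (\<lambda>x. \<Sum>\<alpha>\<in>{\<alpha>. sum \<alpha> UNIV \<le> n}. e \<alpha> x * monomial \<alpha> x)"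
    using assms(2) unfolding poly_periodic_eq by blast
  show ?thesis unfolding poly_periodic_eq
    using c e
    by (intro CollectI exI[of _ "\<lambda>\<alpha> x. c \<alpha> x + e \<alpha> x"])
      (auto simp: distrib_right sum.distrib intro!: periodic_cont_add)
qed

lemma poly_periodic_scale:
  assumes "f \<in> poly_periodic n G"
  shows "(\<lambda>x. d * f x) \<in> poly_periodic n G"
proof -
  obtain c where c: "\<forall>\<alpha>. c \<alpha> \<in> periodic_cont G"
    "f = (\<lambda>x. \<Sum>\<alpha>\<in>{\<alpha>. sum \<alpha> UNIV \<le> n}. c \<alpha> x * monomial \<alpha> x)"
    using assms unfolding poly_periodic_eq by blast
  show ?thesis unfolding poly_periodic_eq
    using c
    by (intro CollectI exI[of _ "\<lambda>\<alpha> x. d * c \<alpha> x"])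
      (auto simp: sum_distrib_left mult.assoc intro!: periodic_cont_scale)
qed

lemma poly_periodic_sum:
  assumes "finite S" "\<And>a. a \<in> S \<Longrightarrow> h a \<in> poly_periodic n G"
  shows "(\<lambda>x. \<Sum>a\<in>S. h a x) \<in> poly_periodic n G"
  using assms
  by (induction S rule: finite_induct) (auto intro: poly_periodic_zero poly_periodic_add)

lemma poly_periodic_coeff_monomial:
  assumes "c \<in> periodic_cont G" "sum \<alpha> UNIV \<le> n"
  shows "(\<lambda>x. c x * monomial \<alpha> x) \<in> poly_periodic n G"
proof -
  let ?c = "\<lambda>\<beta>. if \<beta> = \<alpha> then c else (\<lambda>x. 0)"
  have "(\<Sum>\<beta>\<in>{\<beta>. sum \<beta> UNIV \<le> n}. ?c \<beta> x * monomial \<beta> x) = c x * monomial \<alpha> x" for x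
    using assms(2) by (simp add: if_distrib[of "\<lambda>h. h x * _"] finite_degree_le cong: if_cong)
  then show ?thesis
    unfolding poly_periodic_eq using assms(1) periodic_cont_zero
    by (intro CollectI exI[of _ ?c]) auto
qed

lemma poly_periodic_coeff_polyfun:
  "polyfun_lt (Suc n) q \<Longrightarrow> c \<in> periodic_cont G \<Longrightarrow> (\<lambda>x. c x * q x) \<in> poly_periodic n G"
proof (induction arbitrary: c rule: polyfun_lt.induct)
  case zero
  then show ?case using poly_periodic_zero by simp
next
  case (monomial \<alpha> d)
  then have "(\<lambda>x. (d * c x) * monomial \<alpha> x) \<in> poly_periodic n G"
    by (intro poly_periodic_coeff_monomial periodic_cont_scale) auto
  then show ?case by (simp add: mult.left_commute mult.assoc)
next
  case (add p q)
  then show ?case using poly_periodic_add[OF add.IH] by (simp add: distrib_left)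
qed

lemma poly_periodic_0_subset:
  "poly_periodic 0 G \<subseteq> (periodic_cont G :: (real^'n \<Rightarrow> 'b::real_normed_field) set)"
proof
  fix f :: "real^'n \<Rightarrow> 'b" assume "f \<in> poly_periodic 0 G"
  then obtain c where c: "\<forall>\<alpha>. c \<alpha> \<in> periodic_cont G"
    "f = (\<lambda>x. \<Sum>\<alpha>\<in>{\<alpha>. sum \<alpha> UNIV \<le> 0}. c \<alpha> x * monomial \<alpha> x)"
    unfolding poly_periodic_eq by blast
  have "{\<alpha> :: 'n \<Rightarrow> nat. sum \<alpha> UNIV \<le> 0} = {\<lambda>_. 0}" by (auto simp: fun_eq_iff)
  then have "f = c (\<lambda>_. 0)" using c(2) by (simp add: monomial_eq_1)
  then show "f \<in> periodic_cont G" using c(1) by simp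
qed

lemma poly_periodic_diff:
  fixes f :: "real^'n \<Rightarrow> 'b::real_normed_field"
  assumes f: "f \<in> poly_periodic (Suc n) G" and g: "g \<in> G"
  shows "(\<lambda>x. f (x + g) - f x) \<in> poly_periodic n G"
proof -
  obtain c where c: "\<forall>\<alpha>. c \<alpha> \<in> periodic_cont G"
    "f = (\<lambda>x. \<Sum>\<alpha>\<in>{\<alpha>. sum \<alpha> UNIV \<le> Suc n}. c \<alpha> x * monomial \<alpha> x)"
    using f unfolding poly_periodic_eq by blast
  have "c \<alpha> (x + g) = c \<alpha> x" for \<alpha> x
    using c(1) g unfolding periodic_cont_def by blast
  then have "(\<lambda>x. f (x + g) - f x) =
      (\<lambda>x. \<Sum>\<alpha>\<in>{\<alpha>. sum \<alpha> UNIV \<le> Suc n}. c \<alpha> x * (monomial \<alpha> (x + g) - monomial \<alpha> x))"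
    unfolding c(2) by (simp add: sum_subtractf right_diff_distrib)
  also have "\<dots> \<in> poly_periodic n G"
  proof (intro poly_periodic_sum finite_degree_le)
    fix \<alpha> :: "'n \<Rightarrow> nat" assume "\<alpha> \<in> {\<alpha>. sum \<alpha> UNIV \<le> Suc n}"
    then have "polyfun_lt (Suc n) (\<lambda>x. monomial \<alpha> (x + g) - monomial \<alpha> x)"
      by (intro polyfun_lt_diff_monomial) auto
    then show "(\<lambda>x. c \<alpha> x * (monomial \<alpha> (x + g) - monomial \<alpha> x)) \<in> poly_periodic n G"
      by (rule poly_periodic_coeff_polyfun) (use c(1) in simp)
  qed
  finally show ?thesis .
qed

lemma poly_periodic_subspace: "fun_vs.subspace (poly_periodic n G)"
  unfolding fun_vs.subspace_def
  by (auto simp: zero_fun_def plus_fun_def fun_scale_def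
      intro: poly_periodic_zero poly_periodic_add poly_periodic_scale)

lemma periodic_int_multiple:
  fixes f :: "'a::real_vector \<Rightarrow> 'c"
  assumes "\<And>x. f (x + v) = f x"
  shows "f (x + of_int m *\<^sub>R v) = f x"
proof (induction m arbitrary: x rule: int_induct[of _ 0])
  case (step1 i)
  have "f (x + of_int (i + 1) *\<^sub>R v) = f ((x + of_int i *\<^sub>R v) + v)"
    by (simp add: algebra_simps)
  then show ?case using assms step1.IH by simp
next
  case (step2 i)
  have "f (x + of_int (i - 1) *\<^sub>R v) = f ((x + of_int (i - 1) *\<^sub>R v) + v)"
    using assms by simp
  also have "\<dots> = f (x + of_int i *\<^sub>R v)" by (simp add: algebra_simps)
  finally show ?case using step2.IH by simp
qed simp

lemma periodic_lattice_combination: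
  fixes f :: "'a::real_vector \<Rightarrow> 'c"
  assumes "\<And>j x. f (x + b j) = f x" "finite S"
  shows "f (x + (\<Sum>j\<in>S. of_int (k j) *\<^sub>R b j)) = f x"
  using assms(2)
proof (induction S arbitrary: x rule: finite_induct)
  case (insert j S)
  have "f (x + (\<Sum>j\<in>insert j S. of_int (k j) *\<^sub>R b j)) =
        f ((x + (\<Sum>j\<in>S. of_int (k j) *\<^sub>R b j)) + of_int (k j) *\<^sub>R b j)"
    using insert.hyps by (simp add: algebra_simps)
  also have "\<dots> = f (x + (\<Sum>j\<in>S. of_int (k j) *\<^sub>R b j))"
    using periodic_int_multiple assms(1) by blast
  finally show ?case using insert.IH by simp
qed simp

lemma lattice_basis_mem:
  fixes b :: "'n::finite \<Rightarrow> 'a::real_vector"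
  shows "b i \<in> {(\<Sum>j\<in>UNIV. of_int (k j) *\<^sub>R b j) | k :: 'n \<Rightarrow> int. True}"
proof -
  have "(\<Sum>j\<in>UNIV. of_int (if j = i then 1 else 0) *\<^sub>R b j) = (\<Sum>j\<in>UNIV. if j = i then b j else 0)"
    by (intro sum.cong) auto
  also have "\<dots> = b i" by simp
  finally have "(\<Sum>j\<in>UNIV. of_int (if j = i then 1 else 0) *\<^sub>R b j) = b i" .
  then show ?thesis by (intro CollectI exI[of _ "\<lambda>j. if j = i then 1 else 0"]) auto
qed

lemma periodic_cont_lattice:
  fixes b :: "'i::finite \<Rightarrow> real^'n"
  assumes "G = {(\<Sum>j\<in>UNIV. of_int (k j) *\<^sub>R b j) | k :: 'i \<Rightarrow> int. True}"
    and "continuous_on UNIV f" "\<And>j x. f (x + b j) = f x"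
  shows "f \<in> periodic_cont G"
  using assms periodic_lattice_combination[of f b UNIV] unfolding periodic_cont_def by auto

lemma cont_subspace_subspace: "cont_subspace A \<Longrightarrow> fun_vs.subspace A"
  unfolding cont_subspace_def fun_vs.subspace_def
  by (simp add: zero_fun_def plus_fun_def fun_scale_def)

lemma G_invariant_diff:
  assumes "cont_subspace A" "G_invariant G A" "g \<in> G" "f \<in> A"
  shows "(\<lambda>x. f (x + g) - f x) \<in> A"
proof -
  have "(\<lambda>x. f (x + g)) \<in> A" using assms(2-4) unfolding G_invariant_def by blast
  then show ?thesis
    using fun_vs.subspace_diff[OF cont_subspace_subspace[OF assms(1)] _ assms(4)]
    by (simp add: fun_diff_def)
qed

theorem theorem3p3:
  fixes G :: "(real^'n) set" and A :: "(real^'n \<Rightarrow> 'b::real_normed_field) set"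
  assumes "full_rank_lattice G"
    and "cont_subspace A"
    and "G_invariant G A"
    and "fin_dim (A \<inter> periodic_cont G)"
  shows "\<forall>n::nat. fin_dim (A \<inter> poly_periodic n G)"
proof
  obtain b :: "'n \<Rightarrow> real^'n" where G: "G = {(\<Sum>j\<in>UNIV. of_int (k j) *\<^sub>R b j) | k. True}"
    using assms(1) unfolding full_rank_lattice_def by blast
  then have b_in_G: "b i \<in> G" for i using lattice_basis_mem by blast
  define \<Delta> where "\<Delta> i = (\<lambda>f :: real^'n \<Rightarrow> 'b. \<lambda>x. f (x + b i) - f x)" for i
  fix n show "fin_dim (A \<inter> poly_periodic n G)"
  proof (induction n)
    case 0
    then show ?case using fin_dim_subset[OF assms(4)] poly_periodic_0_subset by blast
  next
    case (Suc n)
    show ?case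
    proof (rule fin_dim_common_kernel[of UNIV \<Delta>])
      show "fin_dim (\<Delta> i ` (A \<inter> poly_periodic (Suc n) G))" for i
        using G_invariant_diff[OF assms(2,3) b_in_G] poly_periodic_diff[OF _ b_in_G]
        by (intro fin_dim_subset[OF Suc.IH]) (auto simp: \<Delta>_def)
      have "{f \<in> A \<inter> poly_periodic (Suc n) G. \<forall>i\<in>UNIV. \<Delta> i f = 0} \<subseteq> A \<inter> periodic_cont G"
        using assms(2) periodic_cont_lattice[OF G]
        by (auto simp: \<Delta>_def fun_eq_iff cont_subspace_def)
      then show "fin_dim {f \<in> A \<inter> poly_periodic (Suc n) G. \<forall>i\<in>UNIV. \<Delta> i f = 0}"
        by (rule fin_dim_subset[OF assms(4)])
    qed (auto simp: \<Delta>_def intro: linear_difference fun_vs.subspace_inter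
        cont_subspace_subspace[OF assms(2)] poly_periodic_subspace)
  qed
qed

end
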